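(* Every partial $H$-module $(M,\pi)$ admits a proper and minimal dilation. More precisely, let $\operatorname{Hom}_k(H,M)$ be the left $H$-module with action $(h\triangleright f)(k)=f(kh)$. Define $\varphi:M\to\operatorname{Hom}_k(H,M)$ by $\varphi(m)(h)=\pi(h)(m)$, let $\overline M=H\triangleright\varphi(M)$ be the $H$-submodule generated by $\varphi(M)$, and define $T_\pi:\overline M\to\overline M$ by $T_\pi(f)=\varphi(f(1_H))$. Then $((\overline M,T_\pi),\varphi)$ is a proper and minimal dilation of $(M,\pi)$. It is called the standard dilation of $M$.
   Context: Throughout, $k$ is a field and $H$ is a Hopf algebra over $k$ with bijective antipode $S$, counit $\epsilon$, and Sweedler notation $\Delta(h)=h_{(1)}\otimes h_{(2)}$. Unadorned tensor products are over $k$. A partial representation of $H$ in a unital algebra $B$ is a linear map $\pi:H\to B$ satisfying, for all $h,k\in H$: - $\pi(1_H)=1_B$; - $\pi(h)\pi(k_{(1)})\pi(S(k_{(2)}))=\pi(hk_{(1)})\pi(S(k_{(2)}))$; - $\pi(h_{(1)})\pi(S(h_{(2)}))\pi(k)=\pi(h_{(1)})\pi(S(h_{(2)})k)$; - $\pi(h)\pi(S(k_{(1)}))\pi(k_{(2)})=\pi(hS(k_{(1)}))\pi(k_{(2)})$; - $\pi(S(h_{(1)}))\pi(h_{(2)})\pi(k)=\pi(S(h_{(1)}))\pi(h_{(2)}k)$. A partial $H$-module is a pair $(M,\pi)$ with $M$ a $k$-vector space and $\pi:H\to\mathrm{End}_k(M)$ a partial representation. A morphism of partial $H$-modules is a linear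 map $f$ with $f\circ\pi(h)=\pi'(h)\circ f$ for all $h\in H$. For a left $H$-module $M$ (action $\triangleright$) and a linear $T:M\to M$, put $T_h(m)=h_{(1)}\triangleright T(S(h_{(2)})\triangleright m)$. A projection $T$ (i.e. $T^2=T$) satisfies the c-condition if $T_h\circ T=T\circ T_h$ for all $h\in H$. If $T$ is such a projection, then $T(M)$ is a partial $H$-module via $\pi_T(h)(m)=T(h\triangleright m)$ for $m\in T(M)$. A dilation of a partial $H$-module $(M,\pi)$ is a pair $((N,T),\theta)$ where: - $N$ is a left $H$-module; - $T$ is a projection on $N$ satisfying the c-condition; - $\theta:M\to T(N)$ is an isomorphism of partial $H$-modules from $(M,\pi)$ to $(T(N),\pi_T)$. The dilation is proper if $N$ is generated as an $H$-module by $T(N)=\theta(M)$. It is minimal if $N$ contains no nonzero $H$-submodule $N'$ with $T(N')=0$. *)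

theory Defs
  imports Complex_Main "HOL-Library.Function_Algebras"
begin

text \<open>The comultiplication of an element h is represented by a finite list
  cop h = [(a_1,b_1),...,(a_n,b_n)] with Delta(h) = sum_i a_i (x) b_i.
  Any expression bilinear in (h_(1), h_(2)) is then evaluated as a sum over
  this list; equalities in tensor products are tested against all
  multilinear forms with values in k (which separate points over a field).\<close>

definition sw :: "('h \<Rightarrow> ('h \<times> 'h) list) \<Rightarrow> 'h \<Rightarrow> ('h \<Rightarrow> 'h \<Rightarrow> 'v::comm_monoid_add) \<Rightarrow> 'v"
  where "sw cop h B = sum_list (map (\<lambda>(a, b). B a b) (cop h))"

definition bilin :: "('k::field \<Rightarrow> 'h::ab_group_add \<Rightarrow> 'h) \<Rightarrow> ('h \<Rightarrow> 'h \<Rightarrow> 'k) \<Rightarrow> bool"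
  where "bilin s B \<longleftrightarrow>
     (\<forall>x y z. B (x + y) z = B x z + B y z) \<and> (\<forall>x y z. B x (y + z) = B x y + B x z) \<and>
     (\<forall>c x y. B (s c x) y = c * B x y) \<and> (\<forall>c x y. B x (s c y) = c * B x y)"

definition trilin :: "('k::field \<Rightarrow> 'h::ab_group_add \<Rightarrow> 'h) \<Rightarrow> ('h \<Rightarrow> 'h \<Rightarrow> 'h \<Rightarrow> 'k) \<Rightarrow> bool"
  where "trilin s F \<longleftrightarrow>
     (\<forall>x x' y z. F (x + x') y z = F x y z + F x' y z) \<and>
     (\<forall>x y y' z. F x (y + y') z = F x y z + F x y' z) \<and>
     (\<forall>x y z z'. F x y (z + z') = F x y z + F x y z') \<and>
     (\<forall>c x y z. F (s c x) y z = c * F x y z) \<and>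
     (\<forall>c x y z. F x (s c y) z = c * F x y z) \<and>
     (\<forall>c x y z. F x y (s c z) = c * F x y z)"

definition hopf_algebra ::
  "('k::field \<Rightarrow> 'h::ring_1 \<Rightarrow> 'h) \<Rightarrow> ('h \<Rightarrow> ('h \<times> 'h) list) \<Rightarrow> ('h \<Rightarrow> 'k) \<Rightarrow> ('h \<Rightarrow> 'h) \<Rightarrow> bool"
  where "hopf_algebra scaleH cop eps S \<longleftrightarrow>
    vector_space scaleH \<and>
    (\<forall>c x y. scaleH c (x * y) = scaleH c x * y \<and> scaleH c (x * y) = x * scaleH c y) \<and>
    \<comment> \<open>Delta is linear\<close>
    (\<forall>B. bilin scaleH B \<longrightarrow>
        (\<forall>x y. sw cop (x + y) B = sw cop x B + sw cop y B) \<and>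
        (\<forall>c x. sw cop (scaleH c x) B = c * sw cop x B)) \<and>
    \<comment> \<open>coassociativity\<close>
    (\<forall>F. trilin scaleH F \<longrightarrow> (\<forall>h.
        sw cop h (\<lambda>a b. sw cop a (\<lambda>a1 a2. F a1 a2 b)) =
        sw cop h (\<lambda>a b. sw cop b (\<lambda>b1 b2. F a b1 b2)))) \<and>
    \<comment> \<open>counit\<close>
    Vector_Spaces.linear scaleH (\<lambda>c x. c * x) eps \<and>
    (\<forall>h. sw cop h (\<lambda>a b. scaleH (eps a) b) = h \<and> sw cop h (\<lambda>a b. scaleH (eps b) a) = h) \<and>
    \<comment> \<open>Delta and eps are algebra maps\<close>
    (\<forall>B. bilin scaleH B \<longrightarrow>
        (\<forall>h k. sw cop (h * k) B = sw cop h (\<lambda>a b. sw cop k (\<lambda>c d. B (a * c) (b * d)))) \<and>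
        sw cop 1 B = B 1 1) \<and>
    (\<forall>h k. eps (h * k) = eps h * eps k) \<and> eps 1 = 1 \<and>
    \<comment> \<open>antipode\<close>
    Vector_Spaces.linear scaleH scaleH S \<and>
    (\<forall>h. sw cop h (\<lambda>a b. S a * b) = scaleH (eps h) 1 \<and> sw cop h (\<lambda>a b. a * S b) = scaleH (eps h) 1) \<and>
    bij S"

definition partial_module ::
  "('k::field \<Rightarrow> 'h::ring_1 \<Rightarrow> 'h) \<Rightarrow> ('h \<Rightarrow> ('h \<times> 'h) list) \<Rightarrow> ('h \<Rightarrow> 'h) \<Rightarrow>
   ('k \<Rightarrow> 'n::ab_group_add \<Rightarrow> 'n) \<Rightarrow> 'n set \<Rightarrow> ('h \<Rightarrow> 'n \<Rightarrow> 'n) \<Rightarrow> bool"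
  where "partial_module scaleH cop S scaleN V rep \<longleftrightarrow>
    vector_space scaleN \<and> module.subspace scaleN V \<and>
    (\<forall>h. \<forall>v\<in>V. rep h v \<in> V) \<and>
    (\<forall>h. \<forall>v\<in>V. \<forall>w\<in>V. rep h (v + w) = rep h v + rep h w) \<and>
    (\<forall>h c. \<forall>v\<in>V. rep h (scaleN c v) = scaleN c (rep h v)) \<and>
    (\<forall>h k. \<forall>v\<in>V. rep (h + k) v = rep h v + rep k v) \<and>
    (\<forall>c h. \<forall>v\<in>V. rep (scaleH c h) v = scaleN c (rep h v)) \<and>
    (\<forall>v\<in>V. rep 1 v = v) \<and>
    (\<forall>h k. \<forall>v\<in>V. sw cop k (\<lambda>a b. rep h (rep a (rep (S b) v)))
                 = sw cop k (\<lambda>a b. rep (h * a) (rep (S b) v))) \<and>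
    (\<forall>h k. \<forall>v\<in>V. sw cop h (\<lambda>a b. rep a (rep (S b) (rep k v)))
                 = sw cop h (\<lambda>a b. rep a (rep (S b * k) v))) \<and>
    (\<forall>h k. \<forall>v\<in>V. sw cop k (\<lambda>a b. rep h (rep (S a) (rep b v)))
                 = sw cop k (\<lambda>a b. rep (h * S a) (rep b v))) \<and>
    (\<forall>h k. \<forall>v\<in>V. sw cop h (\<lambda>a b. rep (S a) (rep b (rep k v)))
                 = sw cop h (\<lambda>a b. rep (S a) (rep (b * k) v)))"

definition partial_iso ::
  "('k::field \<Rightarrow> 'm::ab_group_add \<Rightarrow> 'm) \<Rightarrow> 'm set \<Rightarrow> ('h \<Rightarrow> 'm \<Rightarrow> 'm) \<Rightarrow>
   ('k \<Rightarrow> 'n::ab_group_add \<Rightarrow> 'n) \<Rightarrow> 'n set \<Rightarrow> ('h \<Rightarrow> 'n \<Rightarrow> 'n) \<Rightarrow> ('m \<Rightarrow> 'n) \<Rightarrow> bool"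
  where "partial_iso scaleM V rep scaleN W rho theta \<longleftrightarrow>
    bij_betw theta V W \<and>
    (\<forall>v\<in>V. \<forall>w\<in>V. theta (v + w) = theta v + theta w) \<and>
    (\<forall>c. \<forall>v\<in>V. theta (scaleM c v) = scaleN c (theta v)) \<and>
    (\<forall>h. \<forall>v\<in>V. theta (rep h v) = rho h (theta v))"

definition H_module ::
  "('k::field \<Rightarrow> 'h::ring_1 \<Rightarrow> 'h) \<Rightarrow> ('k \<Rightarrow> 'n::ab_group_add \<Rightarrow> 'n) \<Rightarrow> 'n set \<Rightarrow>
   ('h \<Rightarrow> 'n \<Rightarrow> 'n) \<Rightarrow> bool"
  where "H_module scaleH scaleN N act \<longleftrightarrow>
    vector_space scaleN \<and> module.subspace scaleN N \<and>
    (\<forall>h. \<forall>n\<in>N. act h n \<in> N) \<and>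
    (\<forall>h. \<forall>n\<in>N. \<forall>n'\<in>N. act h (n + n') = act h n + act h n') \<and>
    (\<forall>h c. \<forall>n\<in>N. act h (scaleN c n) = scaleN c (act h n)) \<and>
    (\<forall>h k. \<forall>n\<in>N. act (h + k) n = act h n + act k n) \<and>
    (\<forall>c h. \<forall>n\<in>N. act (scaleH c h) n = scaleN c (act h n)) \<and>
    (\<forall>n\<in>N. act 1 n = n) \<and>
    (\<forall>h k. \<forall>n\<in>N. act (h * k) n = act h (act k n))"

definition H_submodule :: "('k::field \<Rightarrow> 'n::ab_group_add \<Rightarrow> 'n) \<Rightarrow> ('h \<Rightarrow> 'n \<Rightarrow> 'n) \<Rightarrow> 'n set \<Rightarrow> bool"
  where "H_submodule scaleN act N' \<longleftrightarrow>
    module.subspace scaleN N' \<and> (\<forall>h. \<forall>n\<in>N'. act h n \<in> N')"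

definition gen_submodule ::
  "('k::field \<Rightarrow> 'n::ab_group_add \<Rightarrow> 'n) \<Rightarrow> ('h \<Rightarrow> 'n \<Rightarrow> 'n) \<Rightarrow> 'n set \<Rightarrow> 'n set \<Rightarrow> 'n set"
  where "gen_submodule scaleN act N X =
    \<Inter>{N'. N' \<subseteq> N \<and> H_submodule scaleN act N' \<and> X \<subseteq> N'}"

definition projection :: "('k::field \<Rightarrow> 'n::ab_group_add \<Rightarrow> 'n) \<Rightarrow> 'n set \<Rightarrow> ('n \<Rightarrow> 'n) \<Rightarrow> bool"
  where "projection scaleN N T \<longleftrightarrow>
    (\<forall>n\<in>N. T n \<in> N) \<and>
    (\<forall>n\<in>N. \<forall>n'\<in>N. T (n + n') = T n + T n') \<and>
    (\<forall>c. \<forall>n\<in>N. T (scaleN c n) = scaleN c (T n)) \<and>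
    (\<forall>n\<in>N. T (T n) = T n)"

definition Tconj :: "('h \<Rightarrow> ('h \<times> 'h) list) \<Rightarrow> ('h \<Rightarrow> 'h) \<Rightarrow> ('h \<Rightarrow> 'n \<Rightarrow> 'n) \<Rightarrow>
    ('n \<Rightarrow> 'n) \<Rightarrow> 'h \<Rightarrow> 'n \<Rightarrow> 'n::ab_group_add"
  where "Tconj cop S act T h n = sw cop h (\<lambda>a b. act a (T (act (S b) n)))"

definition c_condition :: "('h \<Rightarrow> ('h \<times> 'h) list) \<Rightarrow> ('h \<Rightarrow> 'h) \<Rightarrow> 'n set \<Rightarrow>
    ('h \<Rightarrow> 'n \<Rightarrow> 'n) \<Rightarrow> ('n \<Rightarrow> 'n::ab_group_add) \<Rightarrow> bool"
  where "c_condition cop S N act T \<longleftrightarrow>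
    (\<forall>h. \<forall>n\<in>N. Tconj cop S act T h (T n) = T (Tconj cop S act T h n))"

definition dilation ::
  "('k::field \<Rightarrow> 'h::ring_1 \<Rightarrow> 'h) \<Rightarrow> ('h \<Rightarrow> ('h \<times> 'h) list) \<Rightarrow> ('h \<Rightarrow> 'h) \<Rightarrow>
   ('k \<Rightarrow> 'm::ab_group_add \<Rightarrow> 'm) \<Rightarrow> ('h \<Rightarrow> 'm \<Rightarrow> 'm) \<Rightarrow>
   ('k \<Rightarrow> 'n::ab_group_add \<Rightarrow> 'n) \<Rightarrow> 'n set \<Rightarrow> ('h \<Rightarrow> 'n \<Rightarrow> 'n) \<Rightarrow> ('n \<Rightarrow> 'n) \<Rightarrow>
   ('m \<Rightarrow> 'n) \<Rightarrow> bool"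
  where "dilation scaleH cop S scaleM rep scaleN N act T theta \<longleftrightarrow>
    H_module scaleH scaleN N act \<and>
    projection scaleN N T \<and> c_condition cop S N act T \<and>
    partial_iso scaleM UNIV rep scaleN (T ` N) (\<lambda>h n. T (act h n)) theta"

definition proper_dilation ::
  "('k::field \<Rightarrow> 'n::ab_group_add \<Rightarrow> 'n) \<Rightarrow> 'n set \<Rightarrow> ('h \<Rightarrow> 'n \<Rightarrow> 'n) \<Rightarrow> ('n \<Rightarrow> 'n) \<Rightarrow> bool"
  where "proper_dilation scaleN N act T \<longleftrightarrow> gen_submodule scaleN act N (T ` N) = N"

definition minimal_dilation ::
  "('k::field \<Rightarrow> 'n::ab_group_add \<Rightarrow> 'n) \<Rightarrow> 'n set \<Rightarrow> ('h \<Rightarrow> 'n \<Rightarrow> 'n) \<Rightarrow> ('n \<Rightarrow> 'n) \<Rightarrow> bool"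
  where "minimal_dilation scaleN N act T \<longleftrightarrow>
    (\<forall>N'. N' \<subseteq> N \<longrightarrow> H_submodule scaleN act N' \<longrightarrow> (\<forall>x\<in>N'. T x = 0) \<longrightarrow> N' \<subseteq> {0})"

text \<open>Hom_k(H,M), realised inside the type 'h \<Rightarrow> 'm with pointwise operations.\<close>
definition hom_scale :: "('k::field \<Rightarrow> 'm::ab_group_add \<Rightarrow> 'm) \<Rightarrow> 'k \<Rightarrow> ('h \<Rightarrow> 'm) \<Rightarrow> ('h \<Rightarrow> 'm)"
  where "hom_scale scaleM c f = (\<lambda>x. scaleM c (f x))"

definition Hom :: "('k::field \<Rightarrow> 'h::ab_group_add \<Rightarrow> 'h) \<Rightarrow> ('k \<Rightarrow> 'm::ab_group_add \<Rightarrow> 'm) \<Rightarrow> ('h \<Rightarrow> 'm) set"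
  where "Hom scaleH scaleM = {f. Vector_Spaces.linear scaleH scaleM f}"

definition hom_act :: "'h::times \<Rightarrow> ('h \<Rightarrow> 'm) \<Rightarrow> ('h \<Rightarrow> 'm)" where
  "hom_act h f = (\<lambda>k. f (k * h))"

definition phi :: "('h \<Rightarrow> 'm \<Rightarrow> 'm) \<Rightarrow> 'm \<Rightarrow> ('h \<Rightarrow> 'm)"
  where "phi rep m = (\<lambda>h. rep h m)"

definition Mbar :: "('k::field \<Rightarrow> 'h::ring_1 \<Rightarrow> 'h) \<Rightarrow> ('k \<Rightarrow> 'm::ab_group_add \<Rightarrow> 'm) \<Rightarrow> ('h \<Rightarrow> 'm \<Rightarrow> 'm) \<Rightarrow> ('h \<Rightarrow> 'm) set"
  where "Mbar scaleH scaleM rep =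
    gen_submodule (hom_scale scaleM) hom_act (Hom scaleH scaleM) (range (phi rep))"

definition Tpi :: "('h \<Rightarrow> 'm \<Rightarrow> 'm) \<Rightarrow> ('h::one \<Rightarrow> 'm) \<Rightarrow> ('h \<Rightarrow> 'm)"
  where "Tpi rep f = phi rep (f 1)"

end

theory Submission
  imports Defs
begin

text \<open>Since \<open>\<phi>(m)(1) = m\<close>, the map \<open>\<phi>\<close> is injective and \<open>T\<^sub>\<pi>\<close> is an idempotent
  with image \<open>\<phi>(M)\<close>; minimality holds because \<open>T\<^sub>\<pi>(h \<triangleright> f)(1) = f(h)\<close>. For the
  c-condition, evaluate both sides at \<open>x\<close>: by the first partial representation axiom they
  become \<open>\<pi>(x) \<pi>(h\<^sub>1) \<pi>(S h\<^sub>2) f(1)\<close> and \<open>\<pi>(x) \<pi>(h\<^sub>1) f(S h\<^sub>2)\<close>. These agree for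
  \<open>f = k \<triangleright> \<phi>(m)\<close> by the second axiom, and the functions all of whose translates satisfy
  this identity form an \<open>H\<close>-submodule, which therefore contains \<open>H \<triangleright> \<phi>(M)\<close>.\<close>

lemma subspace_iff:
  "vector_space s \<Longrightarrow>
   module.subspace s A \<longleftrightarrow> 0 \<in> A \<and> (\<forall>x\<in>A. \<forall>y\<in>A. x + y \<in> A) \<and> (\<forall>c. \<forall>x\<in>A. s c x \<in> A)"
  by (simp add: module.subspace_def module_iff_vector_space)

lemma linear_iff:
  "Vector_Spaces.linear s1 s2 f \<longleftrightarrow> vector_space s1 \<and> vector_space s2 \<and>
     (\<forall>x y. f (x + y) = f x + f y) \<and> (\<forall>c x. f (s1 c x) = s2 c (f x))"
  unfolding Vector_Spaces.linear_def module_hom_def module_hom_axioms_def module_iff_vector_space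
  by auto

lemma vector_space_hom_scale: "vector_space s \<Longrightarrow> vector_space (hom_scale s)"
  unfolding vector_space_def hom_scale_def by (auto simp: fun_eq_iff)

lemma sw_apply: "sw cop h F x = sw cop h (\<lambda>a b. F a b x)"
proof -
  have "sum_list (map (\<lambda>(a, b). F a b) xs) x = sum_list (map (\<lambda>(a, b). F a b x) xs)" for xs
    by (induction xs) auto
  then show ?thesis unfolding sw_def .
qed

lemma sw_additive:
  assumes "g 0 = 0" "\<And>u v. g (u + v) = g u + g v"
  shows "g (sw cop h F) = sw cop h (\<lambda>a b. g (F a b))"
proof -
  have "g (sum_list (map (\<lambda>(a, b). F a b) xs)) = sum_list (map (\<lambda>(a, b). g (F a b)) xs)" for xs
    by (induction xs) (auto simp: assms)
  then show ?thesis unfolding sw_def .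
qed

lemma sw_add:
  fixes F :: "_ \<Rightarrow> _ \<Rightarrow> 'v::comm_monoid_add"
  shows "sw cop h (\<lambda>a b. F a b + G a b) = sw cop h F + sw cop h G"
proof -
  have "sum_list (map (\<lambda>(a, b). F a b + G a b) xs) =
      sum_list (map (\<lambda>(a, b). F a b) xs) + sum_list (map (\<lambda>(a, b). G a b) xs)" for xs
    by (induction xs) (auto simp: ac_simps)
  then show ?thesis unfolding sw_def .
qed

lemma gen_submodule_subset:
  "H_submodule s act N \<Longrightarrow> X \<subseteq> N \<Longrightarrow> gen_submodule s act N X \<subseteq> N"
  unfolding gen_submodule_def by blast

lemma subset_gen_submodule: "X \<subseteq> gen_submodule s act N X"
  unfolding gen_submodule_def by blast

lemma gen_submodule_least:
  "N' \<subseteq> N \<Longrightarrow> H_submodule s act N' \<Longrightarrow> X \<subseteq> N' \<Longrightarrow> gen_submodule s act N X \<subseteq> N'"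
  unfolding gen_submodule_def by blast

lemma H_submodule_gen_submodule:
  assumes "vector_space s" "H_submodule s act N" "X \<subseteq> N"
  shows "H_submodule s act (gen_submodule s act N X)"
  using assms unfolding gen_submodule_def H_submodule_def subspace_iff[OF assms(1)] by blast

lemma gen_submodule_idem:
  assumes "vector_space s" "H_submodule s act N" "X \<subseteq> N"
  shows "gen_submodule s act (gen_submodule s act N X) X = gen_submodule s act N X"
proof -
  let ?G = "gen_submodule s act N X"
  have G: "H_submodule s act ?G" "X \<subseteq> ?G"
    by (rule H_submodule_gen_submodule[OF assms], rule subset_gen_submodule)
  have "gen_submodule s act ?G X \<subseteq> N"
    using gen_submodule_subset[OF G] gen_submodule_subset[OF assms(2,3)] by blast
  then have "?G \<subseteq> gen_submodule s act ?G X"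
    by (rule gen_submodule_least[OF _ H_submodule_gen_submodule[OF assms(1) G] subset_gen_submodule])
  with gen_submodule_subset[OF G] show ?thesis by blast
qed

lemma mem_Hom_iff:
  assumes "vector_space scaleH" "vector_space scaleM"
  shows "f \<in> Hom scaleH scaleM \<longleftrightarrow>
    (\<forall>x y. f (x + y) = f x + f y) \<and> (\<forall>c x. f (scaleH c x) = scaleM c (f x))"
  unfolding Hom_def linear_iff using assms by auto

lemma H_submodule_Hom:
  fixes scaleH :: "'k::field \<Rightarrow> 'h::ring_1 \<Rightarrow> 'h" and scaleM :: "'k \<Rightarrow> 'm::ab_group_add \<Rightarrow> 'm"
  assumes VH: "vector_space scaleH" and VM: "vector_space scaleM"
    and scaleH_mult_left: "\<And>c x y. scaleH c (x * y) = scaleH c x * y"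
  shows "H_submodule (hom_scale scaleM) hom_act (Hom scaleH scaleM)"
proof -
  interpret M: vector_space scaleM by (fact VM)
  show ?thesis
    unfolding H_submodule_def subspace_iff[OF vector_space_hom_scale[OF VM]] hom_scale_def hom_act_def
    by (auto simp: mem_Hom_iff[OF VH VM] M.scale_right_distrib M.scale_left_commute add_ac distrib_right
        scaleH_mult_left[symmetric])
qed

lemma H_module_of_Hom_submodule:
  fixes scaleH :: "'k::field \<Rightarrow> 'h::ring_1 \<Rightarrow> 'h" and scaleM :: "'k \<Rightarrow> 'm::ab_group_add \<Rightarrow> 'm"
  assumes VH: "vector_space scaleH" and VM: "vector_space scaleM"
    and scaleH_mult_right: "\<And>c x y. scaleH c (x * y) = x * scaleH c y"
    and "N \<subseteq> Hom scaleH scaleM" "H_submodule (hom_scale scaleM) hom_act N"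
  shows "H_module scaleH (hom_scale scaleM) N hom_act"
proof -
  have "f (x + y) = f x + f y" "f (scaleH c x) = scaleM c (f x)" if "f \<in> N" for f x y c
    using that assms(4) mem_Hom_iff[OF VH VM] by blast+
  then show ?thesis
    using vector_space_hom_scale[OF VM] assms(5) unfolding H_module_def H_submodule_def
    by (auto simp: hom_act_def hom_scale_def distrib_left scaleH_mult_right[symmetric] mult.assoc)
qed

lemma Tpi_hom_act_one:
  fixes rep :: "'h::monoid_mult \<Rightarrow> 'm \<Rightarrow> 'm"
  assumes "\<And>v. rep 1 v = v"
  shows "Tpi rep (hom_act h f) 1 = f h"
  by (simp add: Tpi_def phi_def hom_act_def assms)

lemma minimal_dilation_Tpi:
  fixes rep :: "'h::monoid_mult \<Rightarrow> 'm::ab_group_add \<Rightarrow> 'm"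
  assumes "\<And>v. rep 1 v = v"
  shows "minimal_dilation (hom_scale scaleM) N hom_act (Tpi rep)"
  unfolding minimal_dilation_def
proof (intro allI impI subsetI)
  fix N' f
  assume N': "H_submodule (hom_scale scaleM) hom_act N'" "\<forall>x\<in>N'. Tpi rep x = 0" and "f \<in> N'"
  then have "Tpi rep (hom_act h f) = 0" for h
    unfolding H_submodule_def by blast
  then have "f = 0"
    using Tpi_hom_act_one[of rep, OF assms] by (metis ext zero_fun_def)
  then show "f \<in> {0}" by simp
qed

locale partial_H_module =
  fixes scaleH :: "'k::field \<Rightarrow> 'h::ring_1 \<Rightarrow> 'h"
    and cop :: "'h \<Rightarrow> ('h \<times> 'h) list" and S :: "'h \<Rightarrow> 'h"
    and scaleM :: "'k \<Rightarrow> 'm::ab_group_add \<Rightarrow> 'm" and rep :: "'h \<Rightarrow> 'm \<Rightarrow> 'm"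
  assumes VH: "vector_space scaleH"
    and scaleH_mult_left: "scaleH c (x * y) = scaleH c x * y"
    and scaleH_mult_right: "scaleH c (x * y) = x * scaleH c y"
    and partial: "partial_module scaleH cop S scaleM UNIV rep"
begin

abbreviation "N \<equiv> Mbar scaleH scaleM rep"
abbreviation "T \<equiv> Tpi rep"

lemma VM: "vector_space scaleM"
  and rep_add: "rep h (v + w) = rep h v + rep h w"
  and rep_scale: "rep h (scaleM c v) = scaleM c (rep h v)"
  and rep_add_left: "rep (h + k) v = rep h v + rep k v"
  and rep_scale_left: "rep (scaleH c h) v = scaleM c (rep h v)"
  and rep_one: "rep 1 v = v"
  and rep_mult_right:
    "sw cop k (\<lambda>a b. rep h (rep a (rep (S b) v))) = sw cop k (\<lambda>a b. rep (h * a) (rep (S b) v))"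
  and rep_mult_left:
    "sw cop h (\<lambda>a b. rep a (rep (S b) (rep k v))) = sw cop h (\<lambda>a b. rep a (rep (S b * k) v))"
  using partial unfolding partial_module_def by auto

lemma rep_zero: "rep h 0 = 0"
  using rep_add[of h 0 0] by simp

lemma VN: "vector_space (hom_scale scaleM)"
  by (rule vector_space_hom_scale[OF VM])

lemma H_submodule_Hom': "H_submodule (hom_scale scaleM) hom_act (Hom scaleH scaleM)"
  by (rule H_submodule_Hom[OF VH VM scaleH_mult_left])

lemma phi_in_Hom: "phi rep m \<in> Hom scaleH scaleM"
  unfolding mem_Hom_iff[OF VH VM] phi_def by (simp add: rep_add_left rep_scale_left)

lemma phi_one: "phi rep m 1 = m"
  by (simp add: phi_def rep_one)

lemma Mbar_subset_Hom: "N \<subseteq> Hom scaleH scaleM"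
  unfolding Mbar_def by (rule gen_submodule_subset[OF H_submodule_Hom']) (use phi_in_Hom in blast)

lemma H_submodule_Mbar: "H_submodule (hom_scale scaleM) hom_act N"
  unfolding Mbar_def using H_submodule_gen_submodule[OF VN H_submodule_Hom'] phi_in_Hom by blast

lemma phi_in_Mbar: "phi rep m \<in> N"
  unfolding Mbar_def using subset_gen_submodule by blast

lemma Tpi_image_Mbar: "T ` N = range (phi rep)"
proof
  show "T ` N \<subseteq> range (phi rep)"
    unfolding Tpi_def by blast
  show "range (phi rep) \<subseteq> T ` N"
  proof (rule image_subsetI)
    fix m
    have "phi rep m = T (phi rep m)" by (simp add: Tpi_def phi_one)
    then show "phi rep m \<in> T ` N" using phi_in_Mbar by blast
  qed
qed

lemma H_module_Mbar: "H_module scaleH (hom_scale scaleM) N hom_act"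
  by (rule H_module_of_Hom_submodule[OF VH VM scaleH_mult_right Mbar_subset_Hom H_submodule_Mbar])

lemma projection_Tpi: "projection (hom_scale scaleM) N T"
  unfolding projection_def using phi_in_Mbar
  by (auto simp: Tpi_def phi_one fun_eq_iff phi_def hom_scale_def rep_add rep_scale rep_one)

lemma partial_iso_phi:
  "partial_iso scaleM UNIV rep (hom_scale scaleM) (T ` N) (\<lambda>h f. T (hom_act h f)) (phi rep)"
  unfolding partial_iso_def Tpi_image_Mbar
proof (intro conjI ballI allI)
  show "bij_betw (phi rep) UNIV (range (phi rep))"
    unfolding bij_betw_def inj_def by (metis phi_one)
qed (auto simp: phi_def fun_eq_iff rep_add rep_scale hom_scale_def Tpi_def hom_act_def)

lemma proper_dilation_Mbar: "proper_dilation (hom_scale scaleM) N hom_act T"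
  unfolding proper_dilation_def Tpi_image_Mbar unfolding Mbar_def
  by (rule gen_submodule_idem[OF VN H_submodule_Hom']) (use phi_in_Hom in blast)

definition coherent :: "('h \<Rightarrow> 'm) \<Rightarrow> bool"
  where "coherent f \<longleftrightarrow>
    (\<forall>h. sw cop h (\<lambda>a b. rep a (f (S b))) = sw cop h (\<lambda>a b. rep a (rep (S b) (f 1))))"

lemma coherent_zero: "coherent 0"
  unfolding coherent_def by (simp add: rep_zero)

lemma coherent_add: "coherent f \<Longrightarrow> coherent g \<Longrightarrow> coherent (f + g)"
  unfolding coherent_def by (simp add: rep_add sw_add)

lemma coherent_scale:
  assumes "coherent f"
  shows "coherent (hom_scale scaleM c f)"
proof -
  interpret M: vector_space scaleM by (fact VM)
  have "sw cop h (\<lambda>a b. scaleM c (F a b)) = scaleM c (sw cop h F)" for h F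
    by (rule sw_additive[symmetric]) (simp_all add: M.scale_right_distrib)
  with assms show ?thesis
    unfolding coherent_def hom_scale_def by (simp add: rep_scale)
qed

lemma coherent_hom_act_phi: "coherent (hom_act k (phi rep m))"
  unfolding coherent_def hom_act_def phi_def using rep_mult_left by simp

lemma H_submodule_coherent:
  "H_submodule (hom_scale scaleM) hom_act {f \<in> Hom scaleH scaleM. \<forall>k. coherent (hom_act k f)}"
proof -
  have Hom: "0 \<in> Hom scaleH scaleM"
    "f \<in> Hom scaleH scaleM \<Longrightarrow> g \<in> Hom scaleH scaleM \<Longrightarrow> f + g \<in> Hom scaleH scaleM"
    "f \<in> Hom scaleH scaleM \<Longrightarrow> hom_scale scaleM c f \<in> Hom scaleH scaleM"
    "f \<in> Hom scaleH scaleM \<Longrightarrow> hom_act h f \<in> Hom scaleH scaleM" for f g c h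
    using H_submodule_Hom' unfolding H_submodule_def subspace_iff[OF VN] by blast+
  have "hom_act k (0 :: 'h \<Rightarrow> 'm) = 0" "hom_act k (f + g) = hom_act k f + hom_act k g"
    "hom_act k (hom_scale scaleM c f) = hom_scale scaleM c (hom_act k f)"
    "hom_act k (hom_act h f) = hom_act (k * h) f" for k h :: 'h and f g :: "'h \<Rightarrow> 'm" and c
    by (simp_all add: hom_act_def hom_scale_def fun_eq_iff mult.assoc)
  with Hom show ?thesis
    unfolding H_submodule_def subspace_iff[OF VN]
    by (auto simp: coherent_zero coherent_add coherent_scale)
qed

lemma coherent_Mbar: "f \<in> N \<Longrightarrow> coherent f"
proof -
  assume "f \<in> N"
  moreover have "N \<subseteq> {f \<in> Hom scaleH scaleM. \<forall>k. coherent (hom_act k f)}"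
    unfolding Mbar_def
    by (rule gen_submodule_least[OF _ H_submodule_coherent])
      (use phi_in_Hom coherent_hom_act_phi in auto)
  ultimately have "coherent (hom_act 1 f)" by blast
  then show "coherent f" by (simp add: hom_act_def)
qed

lemma c_condition_Tpi: "c_condition cop S N hom_act T"
  unfolding c_condition_def
proof (intro allI ballI ext)
  fix h f x assume "f \<in> N"
  have "Tconj cop S hom_act T h (T f) x = sw cop h (\<lambda>a b. rep (x * a) (rep (S b) (f 1)))"
    unfolding Tconj_def sw_apply by (simp add: Tpi_def phi_def hom_act_def)
  also have "\<dots> = sw cop h (\<lambda>a b. rep x (rep a (rep (S b) (f 1))))"
    by (rule rep_mult_right[symmetric])
  also have "\<dots> = rep x (sw cop h (\<lambda>a b. rep a (rep (S b) (f 1))))"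
    by (rule sw_additive[symmetric]) (simp_all add: rep_zero rep_add)
  also have "\<dots> = rep x (sw cop h (\<lambda>a b. rep a (f (S b))))"
    using coherent_Mbar[OF \<open>f \<in> N\<close>] unfolding coherent_def by simp
  also have "\<dots> = T (Tconj cop S hom_act T h f) x"
    unfolding Tconj_def Tpi_def phi_def sw_apply by (simp add: hom_act_def)
  finally show "Tconj cop S hom_act T h (T f) x = T (Tconj cop S hom_act T h f) x" .
qed

end

theorem mainTheorem1:
  fixes scaleH :: "'k::field \<Rightarrow> 'h::ring_1 \<Rightarrow> 'h"
    and cop :: "'h \<Rightarrow> ('h \<times> 'h) list" and eps :: "'h \<Rightarrow> 'k" and S :: "'h \<Rightarrow> 'h"
    and scaleM :: "'k \<Rightarrow> 'm::ab_group_add \<Rightarrow> 'm" and rep :: "'h \<Rightarrow> 'm \<Rightarrow> 'm"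
  assumes "hopf_algebra scaleH cop eps S"
    and "partial_module scaleH cop S scaleM UNIV rep"
  shows "dilation scaleH cop S scaleM rep (hom_scale scaleM) (Mbar scaleH scaleM rep) hom_act (Tpi rep) (phi rep)
       \<and> proper_dilation (hom_scale scaleM) (Mbar scaleH scaleM rep) hom_act (Tpi rep)
       \<and> minimal_dilation (hom_scale scaleM) (Mbar scaleH scaleM rep) hom_act (Tpi rep)"
proof -
  have "vector_space scaleH" "\<And>c x y. scaleH c (x * y) = scaleH c x * y"
    "\<And>c x y. scaleH c (x * y) = x * scaleH c y"
    using assms(1) unfolding hopf_algebra_def by blast+
  then interpret partial_H_module scaleH cop S scaleM rep
    using assms(2) by (rule partial_H_module.intro)
  show ?thesis
    unfolding dilation_def
    using H_module_Mbar projection_Tpi c_condition_Tpi partial_iso_phi proper_dilation_Mbar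
      minimal_dilation_Tpi[of rep, OF rep_one]
    by blast
qed

end
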